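(* Let $\Gamma$ be an $N_{\mathbb R}$-parameterized tropical curve, let $\Gamma_0\subset\Gamma$ be the maximal subgraph with $V(\Gamma_0)=V^f(\Gamma)$ whose edges are bounded edges with trivial slope ($N_e=0$), and let $\overline\Gamma=\Gamma/\Gamma_0$ be obtained by contracting each connected component of $\Gamma_0$ to a vertex (with $h_{\overline\Gamma}$ equal to the common value of $h_\Gamma$ on that component, and unchanged elsewhere; this is an $N_{\mathbb R}$-parameterized tropical curve with $g(\overline\Gamma)\le g(\Gamma)$). Fix an orientation of $\Gamma$ and the induced one on $\overline\Gamma$. Then for every abelian group $G$ the natural map $\mathbb E^1_G(\overline\Gamma)\to\mathbb E^1_G(\Gamma)$ (diagonal on vertices, inclusion on edges) is an isomorphism, and there is an exact sequence $$0\to\mathbb E^2_G(\overline\Gamma)\to\mathbb E^2_G(\Gamma)\to N_G^{\,g(\Gamma)-g(\overline\Gamma)}\to0.$$ The same holds with $\mathbb E^\bullet$ replaced by $\mathcal E^\bullet$.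
   Context: $N$ a lattice, $N_G=N\otimes G$. An $N_{\mathbb R}$-parameterized tropical curve: tropical curve $\Gamma$ (finite connected metric graph; finite vertices $V^f$; ordered infinite vertices of valency one joined to finite vertices by unbounded edges of length $\infty$; bounded edges $E^b$ with lengths $|e|>0$) with $h_\Gamma:V(\Gamma)\to N_{\mathbb R}$, $h_\Gamma(v)\in N$ for infinite $v$, $\frac1{|e|}(h_\Gamma(v)-h_\Gamma(v'))\in N$ for bounded $e$ joining $v,v'$, balancing $\sum_{v'\in V^f,e\in E_{vv'}}\frac1{|e|}(h_\Gamma(v')-h_\Gamma(v))+\sum_{v'\in V^\infty,e\in E_{vv'}}h_\Gamma(v')=0$ at each finite $v$. Genus $g(\Gamma)=1-|V(\Gamma)|+|E(\Gamma)|$. Slope $N_e=N\cap\mathbb R(h_\Gamma(v)-h_\Gamma(v'))$ of bounded $e$; multiplicity $l(e)$ = integral length of $\frac1{|e|}(h_\Gamma(v)-h_\Gamma(v'))$. Complexes: with $\epsilon(e,v)=-1,1,0$ if $v$ is initial point, target, neither, define $b_G,\beta_G:\big(\bigoplus_{v\in V^f}N_G\big)\oplus\big(\bigoplus_{e\in E^b}(N_e)_G\big)\to\bigoplus_{e\in E^b}N_G$ by $x_v\mapsto(\epsilon(e,v)x_v)_e$, $x_e\mapsto x_e$ resp. $x_e\mapsto l(e)x_e$; $\mathbb E^1_G,\mathbb E^2_G$ kernel and cokernel of $b_G$, $\mathcal E^1_G,\mathcal E^2_G$ of $\beta_G$. *)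

theory Defs
  imports Complex_Main
begin

text \<open>Lattice N = Z^'n (for a finite index type 'n), N_R = ('n => real),
  N_G = N tensor G = ('n => 'g) for an abelian group 'g.\<close>

record ('v, 'e, 'n) tcurve =
  VF   :: "'v set"            \<comment> \<open>finite vertices\<close>
  VI   :: "'v set"            \<comment> \<open>infinite vertices\<close>
  ED   :: "'e set"
  src  :: "'e \<Rightarrow> 'v"
  tgt  :: "'e \<Rightarrow> 'v"
  len  :: "'e \<Rightarrow> real"      \<comment> \<open>length |e| (used on bounded edges only)\<close>
  hmap :: "'v \<Rightarrow> 'n \<Rightarrow> real"

definition in_lattice :: "('n \<Rightarrow> real) \<Rightarrow> bool" where
  "in_lattice x \<longleftrightarrow> (\<forall>i. x i \<in> \<int>)"

definition bounded_edges :: "('v,'e,'n) tcurve \<Rightarrow> 'e set" where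
  "bounded_edges C = {e \<in> ED C. src C e \<in> VF C \<and> tgt C e \<in> VF C}"

definition unbounded_edges :: "('v,'e,'n) tcurve \<Rightarrow> 'e set" where
  "unbounded_edges C = ED C - bounded_edges C"

definition incident :: "('v,'e,'n) tcurve \<Rightarrow> 'e \<Rightarrow> 'v \<Rightarrow> bool" where
  "incident C e v \<longleftrightarrow> src C e = v \<or> tgt C e = v"

definition other_end :: "('v,'e,'n) tcurve \<Rightarrow> 'e \<Rightarrow> 'v \<Rightarrow> 'v" where
  "other_end C e v = (if src C e = v then tgt C e else src C e)"

definition adjacent :: "('v,'e,'n) tcurve \<Rightarrow> 'v \<Rightarrow> 'v \<Rightarrow> bool" where
  "adjacent C v w \<longleftrightarrow> (\<exists>e\<in>ED C. (src C e = v \<and> tgt C e = w) \<or> (src C e = w \<and> tgt C e = v))"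

definition edge_vec :: "('v,'e,'n) tcurve \<Rightarrow> 'e \<Rightarrow> 'n \<Rightarrow> real" where
  "edge_vec C e = (\<lambda>i. (hmap C (tgt C e) i - hmap C (src C e) i) / len C e)"

definition is_param_trop_curve :: "('v,'e,'n) tcurve \<Rightarrow> bool" where
  "is_param_trop_curve C \<longleftrightarrow>
     finite (VF C) \<and> finite (VI C) \<and> finite (ED C) \<and> VF C \<noteq> {} \<and> VF C \<inter> VI C = {} \<and>
     (\<forall>e\<in>ED C. src C e \<in> VF C \<union> VI C \<and> tgt C e \<in> VF C \<union> VI C \<and>
                (src C e \<in> VF C \<or> tgt C e \<in> VF C)) \<and>
     (\<forall>w\<in>VI C. card {e \<in> ED C. incident C e w} = 1) \<and>
     (\<forall>v\<in>VF C \<union> VI C. \<forall>w\<in>VF C \<union> VI C. (adjacent C)\<^sup>*\<^sup>* v w) \<and>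
     (\<forall>e\<in>bounded_edges C. len C e > 0) \<and>
     (\<forall>w\<in>VI C. in_lattice (hmap C w)) \<and>
     (\<forall>e\<in>bounded_edges C. in_lattice (edge_vec C e)) \<and>
     (\<forall>v\<in>VF C. \<forall>i.
        (\<Sum>e\<in>{e \<in> bounded_edges C. incident C e v}.
            (hmap C (other_end C e v) i - hmap C v i) / len C e)
      + (\<Sum>e\<in>{e \<in> unbounded_edges C. incident C e v}. hmap C (other_end C e v) i) = 0)"

definition genus :: "('v,'e,'n) tcurve \<Rightarrow> int" where
  "genus C = 1 - int (card (VF C \<union> VI C)) + int (card (ED C))"

definition slope :: "('v,'e,'n) tcurve \<Rightarrow> 'e \<Rightarrow> ('n \<Rightarrow> int) set" where
  "slope C e = {a. \<exists>t::real. \<forall>i. real_of_int (a i) = t * (hmap C (tgt C e) i - hmap C (src C e) i)}"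

text \<open>Integral length of a lattice vector w: the l with w = l u, u primitive (0 for w = 0).\<close>
definition int_length :: "('n \<Rightarrow> real) \<Rightarrow> nat" where
  "int_length w = (if w = (\<lambda>_. 0) then 0
     else (GREATEST k::nat. \<exists>u. in_lattice u \<and> w = (\<lambda>i. real k * u i)))"

definition zmul :: "int \<Rightarrow> 'g::ab_group_add \<Rightarrow> 'g" where
  "zmul k g = (if 0 \<le> k then (\<Sum>_\<in>{..<nat k}. g) else - (\<Sum>_\<in>{..<nat (- k)}. g))"

text \<open>(N_e)_G = N_e tensor G, realised as its image in N_G (injective since N_e is saturated).\<close>
definition slope_G :: "('v,'e,'n) tcurve \<Rightarrow> 'e \<Rightarrow> ('n \<Rightarrow> 'g::ab_group_add) set" where
  "slope_G C e = {x. \<exists>J::nat set. \<exists>a g. finite J \<and> (\<forall>j\<in>J. a j \<in> slope C e) \<and>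
                       x = (\<lambda>i. \<Sum>j\<in>J. zmul (a j i) (g j))}"

definition eps :: "('v,'e,'n) tcurve \<Rightarrow> 'e \<Rightarrow> 'v \<Rightarrow> int" where
  "eps C e v = (if v = tgt C e then 1 else 0) - (if v = src C e then 1 else 0)"

text \<open>Edge multiplier: 1 for b_G, l(e) for beta_G (flag cal = True).\<close>
definition edge_mult :: "bool \<Rightarrow> ('v,'e,'n) tcurve \<Rightarrow> 'e \<Rightarrow> int" where
  "edge_mult cal C e = (if cal then int (int_length (edge_vec C e)) else 1)"

definition cx_dom :: "('v,'e,'n) tcurve \<Rightarrow> (('v \<Rightarrow> 'n \<Rightarrow> 'g::ab_group_add) \<times> ('e \<Rightarrow> 'n \<Rightarrow> 'g)) set" where
  "cx_dom C = {(xv, xe). (\<forall>v. v \<notin> VF C \<longrightarrow> xv v = (\<lambda>_. 0)) \<and>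
                         (\<forall>e. e \<notin> bounded_edges C \<longrightarrow> xe e = (\<lambda>_. 0)) \<and>
                         (\<forall>e\<in>bounded_edges C. xe e \<in> slope_G C e)}"

definition cx_cod :: "('v,'e,'n) tcurve \<Rightarrow> ('e \<Rightarrow> 'n \<Rightarrow> 'g::ab_group_add) set" where
  "cx_cod C = {y. \<forall>e. e \<notin> bounded_edges C \<longrightarrow> y e = (\<lambda>_. 0)}"

definition cx_map :: "bool \<Rightarrow> ('v,'e,'n) tcurve \<Rightarrow>
     ('v \<Rightarrow> 'n \<Rightarrow> 'g::ab_group_add) \<times> ('e \<Rightarrow> 'n \<Rightarrow> 'g) \<Rightarrow> ('e \<Rightarrow> 'n \<Rightarrow> 'g)" where
  "cx_map cal C x = (\<lambda>e. if e \<in> bounded_edges C then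
       (\<lambda>i. (\<Sum>v\<in>VF C. zmul (eps C e v) (fst x v i)) + zmul (edge_mult cal C e) (snd x e i))
     else (\<lambda>_. 0))"

text \<open>E^1 (cal = False) / calE^1 (cal = True): kernel; the cokernel E^2 is cx_cod modulo cx_image.\<close>
definition cx_ker :: "bool \<Rightarrow> ('v,'e,'n) tcurve \<Rightarrow> (('v \<Rightarrow> 'n \<Rightarrow> 'g::ab_group_add) \<times> ('e \<Rightarrow> 'n \<Rightarrow> 'g)) set" where
  "cx_ker cal C = {x \<in> cx_dom C. cx_map cal C x = (\<lambda>_ _. 0)}"

definition cx_image :: "bool \<Rightarrow> ('v,'e,'n) tcurve \<Rightarrow> ('e \<Rightarrow> 'n \<Rightarrow> 'g::ab_group_add) set" where
  "cx_image cal C = cx_map cal C ` cx_dom C"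

definition zero_slope_edges :: "('v,'e,'n) tcurve \<Rightarrow> 'e set" where
  "zero_slope_edges C = {e \<in> bounded_edges C. slope C e = {\<lambda>_. 0}}"

definition rel0 :: "('v,'e,'n) tcurve \<Rightarrow> 'v \<Rightarrow> 'v \<Rightarrow> bool" where
  "rel0 C v w \<longleftrightarrow> (\<exists>e\<in>zero_slope_edges C. (src C e = v \<and> tgt C e = w) \<or> (src C e = w \<and> tgt C e = v))"

definition vclass :: "('v,'e,'n) tcurve \<Rightarrow> 'v \<Rightarrow> 'v set" where
  "vclass C v = (if v \<in> VF C then {w \<in> VF C. (rel0 C)\<^sup>*\<^sup>* v w} else {v})"

definition contract :: "('v,'e,'n) tcurve \<Rightarrow> ('v set,'e,'n) tcurve" where
  "contract C = \<lparr> VF = vclass C ` VF C, VI = vclass C ` VI C,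
                  ED = ED C - zero_slope_edges C,
                  src = vclass C \<circ> src C, tgt = vclass C \<circ> tgt C, len = len C,
                  hmap = (\<lambda>c. hmap C (SOME v. v \<in> c)) \<rparr>"

definition nat_map1 :: "('v,'e,'n) tcurve \<Rightarrow>
    ('v set \<Rightarrow> 'n \<Rightarrow> 'g::ab_group_add) \<times> ('e \<Rightarrow> 'n \<Rightarrow> 'g) \<Rightarrow> ('v \<Rightarrow> 'n \<Rightarrow> 'g) \<times> ('e \<Rightarrow> 'n \<Rightarrow> 'g)" where
  "nat_map1 C x = ((\<lambda>v. if v \<in> VF C then fst x (vclass C v) else (\<lambda>_. 0)), snd x)"

text \<open>N_G^k as finitely indexed tuples.\<close>
definition NG_pow :: "nat \<Rightarrow> (nat \<Rightarrow> 'n \<Rightarrow> 'g::ab_group_add) set" where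
  "NG_pow k = {f. \<forall>j\<ge>k. f j = (\<lambda>_. 0)}"

end

theory Submission
  imports Defs "HOL-Library.Function_Algebras"
begin

(* The differential b_G (resp. beta_G) restricted to an edge e of Gamma0 is just the coboundary
   x(tgt e) - x(src e) of the vertex part, because (N_e)_G = 0 there.  Hence:
   - an element of the domain of Gamma whose differential vanishes on Gamma0 is constant on the
     components of Gamma0, i.e. comes from Gamma/Gamma0; this identifies the kernels E^1 and
     shows that the images agree on cochains of Gamma/Gamma0;
   - a cochain of Gamma lies in (cochains of Gamma/Gamma0) + (image) iff its restriction to
     Gamma0 is a coboundary of Gamma0, so E^2(Gamma)/E^2(Gamma/Gamma0) is the cokernel of the
     coboundary N_G^V(Gamma0) -> N_G^E(Gamma0).
   The first section proves, for an arbitrary finite graph and coefficient group M, that this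
   cokernel is M^b with b = |E| - |V| + #components (induction on edges: an edge closing a cycle
   adds a free coordinate, a bridge merges two components). *)

section \<open>Coboundary of a finite graph with coefficients in an abelian group\<close>

definition edge_adj :: "'e set \<Rightarrow> ('e \<Rightarrow> 'v) \<Rightarrow> ('e \<Rightarrow> 'v) \<Rightarrow> 'v \<Rightarrow> 'v \<Rightarrow> bool" where
  "edge_adj Z s t v w \<longleftrightarrow> (\<exists>e\<in>Z. (s e = v \<and> t e = w) \<or> (s e = w \<and> t e = v))"

abbreviation linked :: "'e set \<Rightarrow> ('e \<Rightarrow> 'v) \<Rightarrow> ('e \<Rightarrow> 'v) \<Rightarrow> 'v \<Rightarrow> 'v \<Rightarrow> bool" where
  "linked Z s t \<equiv> (edge_adj Z s t)\<^sup>*\<^sup>*"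

definition component :: "'v set \<Rightarrow> 'e set \<Rightarrow> ('e \<Rightarrow> 'v) \<Rightarrow> ('e \<Rightarrow> 'v) \<Rightarrow> 'v \<Rightarrow> 'v set" where
  "component V Z s t v = {w \<in> V. linked Z s t v w}"

definition graph_components :: "'v set \<Rightarrow> 'e set \<Rightarrow> ('e \<Rightarrow> 'v) \<Rightarrow> ('e \<Rightarrow> 'v) \<Rightarrow> 'v set set" where
  "graph_components V Z s t = component V Z s t ` V"

definition cochains :: "'e set \<Rightarrow> ('e \<Rightarrow> 'm::zero) set" where
  "cochains Z = {y. \<forall>e. e \<notin> Z \<longrightarrow> y e = 0}"

definition coboundary :: "'e set \<Rightarrow> ('e \<Rightarrow> 'v) \<Rightarrow> ('e \<Rightarrow> 'v) \<Rightarrow> ('v \<Rightarrow> 'm::ab_group_add) \<Rightarrow> 'e \<Rightarrow> 'm" where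
  "coboundary Z s t x = (\<lambda>e. if e \<in> Z then x (t e) - x (s e) else 0)"

definition tuples :: "nat \<Rightarrow> (nat \<Rightarrow> 'm::zero) set" where
  "tuples b = {f. \<forall>j\<ge>b. f j = 0}"

definition presents_cokernel ::
    "'e set \<Rightarrow> ('e \<Rightarrow> 'v) \<Rightarrow> ('e \<Rightarrow> 'v) \<Rightarrow> (('e \<Rightarrow> 'm::ab_group_add) \<Rightarrow> nat \<Rightarrow> 'm) \<Rightarrow> nat \<Rightarrow> bool" where
  "presents_cokernel Z s t p b \<longleftrightarrow>
     (\<forall>y\<in>cochains Z. \<forall>z\<in>cochains Z. p (y + z) = p y + p z) \<and>
     p ` cochains Z = tuples b \<and>
     {y \<in> cochains Z. p y = 0} = range (coboundary Z s t)"

lemma linked_sym: "linked Z s t v w \<Longrightarrow> linked Z s t w v"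
  by (rule sympD[OF symp_rtranclp]) (auto simp: symp_def edge_adj_def)

lemma linked_edge: "e \<in> Z \<Longrightarrow> linked Z s t (s e) (t e)"
  by (rule r_into_rtranclp) (auto simp: edge_adj_def)

lemma linked_insert:
  "linked (insert e Z) s t v w \<longleftrightarrow>
     linked Z s t v w \<or> (linked Z s t v (s e) \<and> linked Z s t (t e) w)
     \<or> (linked Z s t v (t e) \<and> linked Z s t (s e) w)"
  (is "?L \<longleftrightarrow> ?R")
proof
  assume ?L then show ?R
  proof (induction rule: rtranclp_induct)
    case (step y z)
    then consider "edge_adj Z s t y z" | "s e = y \<and> t e = z" | "s e = z \<and> t e = y"
      unfolding edge_adj_def by blast
    then show ?case
      using step.IH by cases (auto intro: rtranclp.rtrancl_into_rtrancl)
  qed simp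
next
  have "linked Z s t a b \<Longrightarrow> linked (insert e Z) s t a b" for a b
    by (rule rtranclp_mono[THEN predicate2D, of "edge_adj Z s t"]) (auto simp: edge_adj_def)
  moreover have "linked (insert e Z) s t (s e) (t e)" "linked (insert e Z) s t (t e) (s e)"
    using linked_edge[of e "insert e Z" s t] linked_sym by auto
  ultimately show "?R \<Longrightarrow> ?L" by (meson rtranclp_trans)
qed

text \<open>Integration along a path: a path from u to w yields an additive functional on edge
  cochains sending every coboundary \<delta>x to x w - x u.\<close>
lemma path_functional:
  assumes "linked Z s t u w"
  shows "\<exists>\<psi>::('e \<Rightarrow> 'm::ab_group_add) \<Rightarrow> 'm. (\<forall>y z. \<psi> (y + z) = \<psi> y + \<psi> z) \<and>
           (\<forall>x. \<psi> (coboundary Z s t x) = x w - x u)"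
  using assms
proof (induction rule: rtranclp_induct)
  case base
  show ?case by (rule exI[of _ "\<lambda>_. 0"]) simp
next
  case (step w w')
  then obtain \<psi> :: "('e \<Rightarrow> 'm) \<Rightarrow> 'm" where add: "\<forall>y z. \<psi> (y + z) = \<psi> y + \<psi> z"
    and cob: "\<forall>x. \<psi> (coboundary Z s t x) = x w - x u" by blast
  from step(2) obtain f where f: "f \<in> Z" "(s f = w \<and> t f = w') \<or> (s f = w' \<and> t f = w)"
    unfolding edge_adj_def by blast
  then consider "s f = w" "t f = w'" | "s f = w'" "t f = w" by blast
  then show ?case
  proof cases
    case 1
    show ?thesis
      by (rule exI[of _ "\<lambda>y. \<psi> y + y f"])
         (use add[unfolded plus_fun_def] cob f 1 in \<open>simp add: coboundary_def algebra_simps\<close>)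
  next
    case 2
    show ?thesis
      by (rule exI[of _ "\<lambda>y. \<psi> y - y f"])
         (use add[unfolded plus_fun_def] cob f 2 in \<open>simp add: coboundary_def algebra_simps\<close>)
  qed
qed

lemma linked_const:
  assumes "\<forall>e\<in>Z. f (t e) = f (s e)" and "linked Z s t v w"
  shows "f w = f v"
  using assms(2) by (induction rule: rtranclp_induct) (use assms(1) in \<open>auto simp: edge_adj_def\<close>)

lemma component_eq: "linked Z s t v u \<Longrightarrow> component V Z s t u = component V Z s t v"
  unfolding component_def by (meson linked_sym rtranclp_trans)

lemma component_insert:
  "component V (insert e Z) s t v =
     (if linked Z s t v (s e) \<or> linked Z s t v (t e)
      then component V Z s t (s e) \<union> component V Z s t (t e) else component V Z s t v)"
  unfolding component_def linked_insert by (auto intro: linked_sym rtranclp_trans)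

lemma components_insert_cycle:
  assumes "linked Z s t (s e) (t e)"
  shows "graph_components V (insert e Z) s t = graph_components V Z s t"
proof -
  have "component V (insert e Z) s t v = component V Z s t v" for v
    using assms component_eq[of Z s t v "s e" V] component_eq[of Z s t "s e" "t e" V]
      component_eq[of Z s t v "t e" V]
    by (auto simp: component_insert)
  then show ?thesis unfolding graph_components_def by simp
qed

lemma components_insert_bridge:
  assumes fin: "finite V" and ends: "s e \<in> V" "t e \<in> V"
    and bridge: "\<not> linked Z s t (s e) (t e)"
  shows "card (graph_components V (insert e Z) s t) + 1 = card (graph_components V Z s t)"
proof -
  let ?comp = "component V Z s t"
  define A where "A = ?comp (s e)"
  define B where "B = ?comp (t e)"
  have sA: "s e \<in> A" and tB: "t e \<in> B"
    using ends unfolding A_def B_def component_def by auto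
  have comp_iff: "?comp v = ?comp u \<longleftrightarrow> linked Z s t v u" if "u \<in> V" for u v
  proof
    assume "?comp v = ?comp u"
    moreover have "u \<in> ?comp u" using that by (simp add: component_def)
    ultimately have "u \<in> ?comp v" by simp
    then show "linked Z s t v u" by (simp add: component_def)
  qed (rule component_eq[symmetric])
  have A_iff: "?comp v = A \<longleftrightarrow> linked Z s t v (s e)" for v
    unfolding A_def using comp_iff ends by blast
  have B_iff: "?comp v = B \<longleftrightarrow> linked Z s t v (t e)" for v
    unfolding B_def using comp_iff ends by blast
  have AB: "A \<in> graph_components V Z s t" "B \<in> graph_components V Z s t" "A \<noteq> B"
    using ends bridge sA linked_sym unfolding graph_components_def A_def B_def component_def by auto
  have AB_new: "A \<union> B \<notin> graph_components V Z s t"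
  proof
    assume "A \<union> B \<in> graph_components V Z s t"
    then obtain v where "A \<union> B = ?comp v" unfolding graph_components_def by auto
    then have "linked Z s t v (s e)" "linked Z s t v (t e)" using sA tB unfolding component_def by auto
    then show False using bridge by (meson linked_sym rtranclp_trans)
  qed
  have "graph_components V (insert e Z) s t = insert (A \<union> B) (graph_components V Z s t - {A, B})"
    unfolding graph_components_def component_insert A_def[symmetric] B_def[symmetric]
    using ends A_iff B_iff by (auto simp: image_iff)
  moreover have finite: "finite (graph_components V Z s t)"
    unfolding graph_components_def using fin by simp
  moreover have "2 \<le> card (graph_components V Z s t)"
    using card_mono[OF finite, of "{A, B}"] AB by simp
  ultimately show ?thesis using AB AB_new by (simp add: card_Diff_subset)
qed

lemma cochains_restrict: "y \<in> cochains (insert e F) \<Longrightarrow> y(e := 0) \<in> cochains F"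
  unfolding cochains_def by auto

lemma cochains_restrict_id: "e \<notin> F \<Longrightarrow> y \<in> cochains F \<Longrightarrow> y(e := 0) = y"
  unfolding cochains_def by (auto simp: fun_eq_iff)

lemma cochains_restrict_image:
  fixes F :: "'e set"
  assumes "e \<notin> F"
  shows "(\<lambda>y :: 'e \<Rightarrow> 'm::zero. y(e := 0)) ` cochains (insert e F) = cochains F"
proof
  show "(\<lambda>y :: 'e \<Rightarrow> 'm. y(e := 0)) ` cochains (insert e F) \<subseteq> cochains F"
    by (auto intro: cochains_restrict)
  show "cochains F \<subseteq> (\<lambda>y :: 'e \<Rightarrow> 'm. y(e := 0)) ` cochains (insert e F)"
  proof
    fix y :: "'e \<Rightarrow> 'm" assume y: "y \<in> cochains F"
    then have "y \<in> cochains (insert e F)" unfolding cochains_def by auto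
    then show "y \<in> (\<lambda>y. y(e := 0)) ` cochains (insert e F)"
      using cochains_restrict_id[OF assms y] by (metis image_eqI)
  qed
qed

lemma restrict_add: "(y + z)(e := (0::'m::monoid_add)) = y(e := 0) + z(e := 0)"
  by (auto simp: fun_eq_iff)

lemma coboundary_cochain: "coboundary F s t x \<in> cochains F"
  unfolding coboundary_def cochains_def by auto

lemma coboundary_insert:
  "e \<notin> F \<Longrightarrow> coboundary (insert e F) s t x = (coboundary F s t x)(e := x (t e) - x (s e))"
  unfolding coboundary_def by (auto simp: fun_eq_iff)

lemma coboundary_restrict: "e \<notin> F \<Longrightarrow> (coboundary (insert e F) s t x)(e := 0) = coboundary F s t x"
  unfolding coboundary_def by (auto simp: fun_eq_iff)

lemma coboundary_shift:
  assumes "\<forall>f\<in>F. s f \<in> K \<longleftrightarrow> t f \<in> K"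
  shows "coboundary F s t (\<lambda>v. x v + (if v \<in> K then c else 0)) = coboundary F s t x"
  using assms unfolding coboundary_def by (auto simp: fun_eq_iff)

subsection \<open>The cokernel of the coboundary is free of rank the first Betti number\<close>

lemma presents_cokernel_empty:
  fixes s t :: "'e \<Rightarrow> 'v"
  shows "presents_cokernel {} s t ((\<lambda>_. 0) :: ('e \<Rightarrow> 'm::ab_group_add) \<Rightarrow> nat \<Rightarrow> 'm) 0"
proof -
  have "cochains {} = {0::'e \<Rightarrow> 'm}" "tuples 0 = {0::nat \<Rightarrow> 'm}"
    "coboundary {} s t x = 0" for x :: "'v \<Rightarrow> 'm"
    unfolding cochains_def tuples_def coboundary_def by (auto simp: fun_eq_iff)
  then show ?thesis unfolding presents_cokernel_def by auto
qed

lemma presents_cokernelD: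
  assumes "presents_cokernel Z s t p b"
  shows "\<forall>y\<in>cochains Z. \<forall>z\<in>cochains Z. p (y + z) = p y + p z"
    and "p ` cochains Z = tuples b"
    and "y \<in> cochains Z \<Longrightarrow> p y = 0 \<longleftrightarrow> (\<exists>x. y = coboundary Z s t x)"
  using assms unfolding presents_cokernel_def by blast+

text \<open>For an edge e closing a cycle of F, the presentation of F is extended by one
  coordinate: the value of y on e minus the integral \<psi> of y along a path in F between the
  endpoints of e.\<close>
definition cycle_extension ::
    "(('e \<Rightarrow> 'm::ab_group_add) \<Rightarrow> nat \<Rightarrow> 'm) \<Rightarrow> (('e \<Rightarrow> 'm) \<Rightarrow> 'm) \<Rightarrow> nat \<Rightarrow> 'e \<Rightarrow> ('e \<Rightarrow> 'm) \<Rightarrow> nat \<Rightarrow> 'm" where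
  "cycle_extension p \<psi> b e y = (\<lambda>j. if j < b then p (y(e := 0)) j
                                    else if j = b then y e - \<psi> (y(e := 0)) else 0)"

lemma cycle_extension_image:
  fixes p :: "('e \<Rightarrow> 'm::ab_group_add) \<Rightarrow> nat \<Rightarrow> 'm"
  assumes e: "e \<notin> F" and p_im: "p ` cochains F = tuples b"
  shows "cycle_extension p \<psi> b e ` cochains (insert e F) = tuples (Suc b)"
proof
  show "cycle_extension p \<psi> b e ` cochains (insert e F) \<subseteq> tuples (Suc b)"
    unfolding cycle_extension_def tuples_def by auto
  show "tuples (Suc b) \<subseteq> cycle_extension p \<psi> b e ` cochains (insert e F)"
  proof
    fix f :: "nat \<Rightarrow> 'm" assume f: "f \<in> tuples (Suc b)"
    have "(\<lambda>j. if j < b then f j else 0) \<in> tuples b" unfolding tuples_def by auto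
    then obtain y where y: "y \<in> cochains F" "p y = (\<lambda>j. if j < b then f j else 0)"
      unfolding p_im[symmetric] by force
    define y' where "y' = y(e := f b + \<psi> y)"
    have restr: "y'(e := 0) = y" and at_e: "y' e = f b + \<psi> y"
      unfolding y'_def using cochains_restrict_id[OF e y(1)] by simp_all
    have "y' \<in> cochains (insert e F)" using y(1) unfolding y'_def cochains_def by auto
    moreover have "cycle_extension p \<psi> b e y' = f"
      using f y(2) unfolding cycle_extension_def restr at_e tuples_def by (auto simp: fun_eq_iff)
    ultimately show "f \<in> cycle_extension p \<psi> b e ` cochains (insert e F)" by blast
  qed
qed

lemma cycle_extension_kernel:
  fixes p :: "('e \<Rightarrow> 'm::ab_group_add) \<Rightarrow> nat \<Rightarrow> 'm" and s t :: "'e \<Rightarrow> 'v"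
  assumes e: "e \<notin> F" and pres: "presents_cokernel F s t p b"
    and \<psi>_cob: "\<forall>x. \<psi> (coboundary F s t x) = x (t e) - x (s e)"
  shows "{y \<in> cochains (insert e F). cycle_extension p \<psi> b e y = 0} = range (coboundary (insert e F) s t)"
proof
  show "{y \<in> cochains (insert e F). cycle_extension p \<psi> b e y = 0} \<subseteq> range (coboundary (insert e F) s t)"
  proof
    fix y :: "'e \<Rightarrow> 'm" assume "y \<in> {y \<in> cochains (insert e F). cycle_extension p \<psi> b e y = 0}"
    then have y: "y(e := 0) \<in> cochains F" "cycle_extension p \<psi> b e y = 0"
      using cochains_restrict by auto
    have "p (y(e := 0)) j = 0" for j
    proof (cases "j < b")
      case True then show ?thesis using fun_cong[OF y(2), of j] unfolding cycle_extension_def by simp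
    next
      case False
      have "p (y(e := 0)) \<in> tuples b" using presents_cokernelD(2)[OF pres] y(1) by blast
      then show ?thesis using False unfolding tuples_def by simp
    qed
    then obtain x where x: "y(e := 0) = coboundary F s t x"
      using presents_cokernelD(3)[OF pres y(1)] by (auto simp: fun_eq_iff)
    have "y e = x (t e) - x (s e)"
      using fun_cong[OF y(2), of b] \<psi>_cob unfolding cycle_extension_def x by simp
    then have "y = coboundary (insert e F) s t x"
      unfolding coboundary_insert[OF e] x[symmetric] by (simp add: fun_upd_idem)
    then show "y \<in> range (coboundary (insert e F) s t)" by blast
  qed
  show "range (coboundary (insert e F) s t) \<subseteq> {y \<in> cochains (insert e F). cycle_extension p \<psi> b e y = 0}"
  proof
    fix y :: "'e \<Rightarrow> 'm" assume "y \<in> range (coboundary (insert e F) s t)"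
    then obtain x where x: "y = coboundary (insert e F) s t x" by blast
    have "p (coboundary F s t x) = 0"
      using presents_cokernelD(3)[OF pres coboundary_cochain[of F s t x]] by blast
    then have "cycle_extension p \<psi> b e y = 0"
      using \<psi>_cob unfolding cycle_extension_def x coboundary_restrict[OF e]
      by (simp add: coboundary_def fun_eq_iff)
    then show "y \<in> {y \<in> cochains (insert e F). cycle_extension p \<psi> b e y = 0}"
      using coboundary_cochain[of "insert e F" s t x] x by simp
  qed
qed

lemma presents_cokernel_cycle:
  fixes p :: "('e \<Rightarrow> 'm::ab_group_add) \<Rightarrow> nat \<Rightarrow> 'm" and s t :: "'e \<Rightarrow> 'v"
  assumes e: "e \<notin> F" and pres: "presents_cokernel F s t p b"
    and cycle: "linked F s t (s e) (t e)"
  shows "\<exists>p' :: ('e \<Rightarrow> 'm) \<Rightarrow> nat \<Rightarrow> 'm. presents_cokernel (insert e F) s t p' (Suc b)"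
proof -
  obtain \<psi> :: "('e \<Rightarrow> 'm) \<Rightarrow> 'm" where \<psi>_add: "\<forall>y z. \<psi> (y + z) = \<psi> y + \<psi> z"
    and \<psi>_cob: "\<forall>x. \<psi> (coboundary F s t x) = x (t e) - x (s e)"
    using path_functional[OF cycle] by blast
  have "\<forall>y\<in>cochains (insert e F). \<forall>z\<in>cochains (insert e F).
          cycle_extension p \<psi> b e (y + z) = cycle_extension p \<psi> b e y + cycle_extension p \<psi> b e z"
  proof (intro ballI)
    fix y z :: "'e \<Rightarrow> 'm" assume "y \<in> cochains (insert e F)" "z \<in> cochains (insert e F)"
    then show "cycle_extension p \<psi> b e (y + z) = cycle_extension p \<psi> b e y + cycle_extension p \<psi> b e z"
      using presents_cokernelD(1)[OF pres, rule_format, OF cochains_restrict cochains_restrict] \<psi>_add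
      unfolding cycle_extension_def restrict_add by (auto simp: fun_eq_iff algebra_simps)
  qed
  then have "presents_cokernel (insert e F) s t (cycle_extension p \<psi> b e) (Suc b)"
    using cycle_extension_image[OF e presents_cokernelD(2)[OF pres]]
      cycle_extension_kernel[OF e pres \<psi>_cob]
    unfolding presents_cokernel_def by blast
  then show ?thesis by blast
qed

text \<open>Across an edge e joining two components of F, a cochain that is a coboundary away from e
  is a coboundary: shift the potential by a constant on the component of the target of e.\<close>
lemma coboundary_across_bridge:
  fixes y :: "'e \<Rightarrow> 'm::ab_group_add" and s t :: "'e \<Rightarrow> 'v"
  assumes e: "e \<notin> F" and bridge: "\<not> linked F s t (s e) (t e)"
    and x: "y(e := 0) = coboundary F s t x"
  shows "y \<in> range (coboundary (insert e F) s t)"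
proof -
  define K where "K = {w. linked F s t (t e) w}"
  have K_closed: "\<forall>f\<in>F. s f \<in> K \<longleftrightarrow> t f \<in> K"
  proof
    fix f assume "f \<in> F"
    then have fwd: "linked F s t (s f) (t f)" by (rule linked_edge)
    then have bwd: "linked F s t (t f) (s f)" by (rule linked_sym)
    show "s f \<in> K \<longleftrightarrow> t f \<in> K"
      unfolding K_def mem_Collect_eq using fwd bwd rtranclp_trans by metis
  qed
  have K_ends: "t e \<in> K" "s e \<notin> K" using bridge linked_sym[of F s t "t e" "s e"] unfolding K_def by auto
  define c where "c = y e - (x (t e) - x (s e))"
  define x' where "x' v = x v + (if v \<in> K then c else 0)" for v
  have "coboundary F s t x' = y(e := 0)"
    unfolding x'_def coboundary_shift[OF K_closed] x ..
  moreover have "x' (t e) - x' (s e) = y e"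
    using K_ends unfolding x'_def c_def by (simp add: algebra_simps)
  ultimately have "y = coboundary (insert e F) s t x'"
    unfolding coboundary_insert[OF e] by simp
  then show ?thesis by blast
qed

lemma presents_cokernel_bridge:
  fixes p :: "('e \<Rightarrow> 'm::ab_group_add) \<Rightarrow> nat \<Rightarrow> 'm" and s t :: "'e \<Rightarrow> 'v"
  assumes e: "e \<notin> F" and pres: "presents_cokernel F s t p b"
    and bridge: "\<not> linked F s t (s e) (t e)"
  shows "presents_cokernel (insert e F) s t (\<lambda>y. p (y(e := 0))) b"
proof -
  note p_add = presents_cokernelD(1)[OF pres] and p_im = presents_cokernelD(2)[OF pres]
    and p_ker = presents_cokernelD(3)[OF pres]
  have "{y \<in> cochains (insert e F). p (y(e := 0)) = 0} \<subseteq> range (coboundary (insert e F) s t)"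
    using p_ker[OF cochains_restrict] coboundary_across_bridge[OF e bridge] by blast
  moreover have "range (coboundary (insert e F) s t) \<subseteq> {y \<in> cochains (insert e F). p (y(e := 0)) = 0}"
  proof
    fix y :: "'e \<Rightarrow> 'm" assume "y \<in> range (coboundary (insert e F) s t)"
    then obtain x where x: "y = coboundary (insert e F) s t x" by blast
    have "p (coboundary F s t x) = 0" using p_ker[OF coboundary_cochain[of F s t x]] by blast
    then show "y \<in> {y \<in> cochains (insert e F). p (y(e := 0)) = 0}"
      using coboundary_cochain[of "insert e F" s t x] by (simp add: x coboundary_restrict[OF e])
  qed
  moreover have "(\<lambda>y. p (y(e := 0))) ` cochains (insert e F) = tuples b"
    using p_im cochains_restrict_image[OF e] by (metis image_image)
  moreover have "\<forall>y\<in>cochains (insert e F). \<forall>z\<in>cochains (insert e F).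
      p ((y + z)(e := 0)) = p (y(e := 0)) + p (z(e := 0))"
    using p_add by (simp add: restrict_add cochains_restrict)
  ultimately show ?thesis unfolding presents_cokernel_def by blast
qed

theorem coboundary_cokernel:
  assumes "finite Z" "finite V" "\<forall>e\<in>Z. s e \<in> V \<and> t e \<in> V"
  shows "\<exists>(p::('e \<Rightarrow> 'm::ab_group_add) \<Rightarrow> nat \<Rightarrow> 'm) b. presents_cokernel Z s t p b
     \<and> b + card V = card Z + card (graph_components V Z s t)"
  using assms(1,3)
proof (induction Z rule: finite_induct)
  case empty
  have "linked {} s t v w \<longleftrightarrow> v = w" for v w
  proof
    show "linked {} s t v w \<Longrightarrow> v = w"
      by (induction rule: rtranclp_induct) (auto simp: edge_adj_def)
  qed simp
  then have "graph_components V {} s t = (\<lambda>v. {v}) ` V"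
    unfolding graph_components_def component_def by auto
  then have "card (graph_components V {} s t) = card V" by (simp add: card_image)
  then show ?case using presents_cokernel_empty by fastforce
next
  case (insert e F)
  then obtain p :: "('e \<Rightarrow> 'm) \<Rightarrow> nat \<Rightarrow> 'm" and b where
    pres: "presents_cokernel F s t p b" and
    count: "b + card V = card F + card (graph_components V F s t)" by auto
  show ?case
  proof (cases "linked F s t (s e) (t e)")
    case True
    then obtain p' :: "('e \<Rightarrow> 'm) \<Rightarrow> nat \<Rightarrow> 'm" where "presents_cokernel (insert e F) s t p' (Suc b)"
      using presents_cokernel_cycle[OF insert.hyps(2) pres] by blast
    moreover have "Suc b + card V = card (insert e F) + card (graph_components V (insert e F) s t)"
      using count insert.hyps True by (simp add: components_insert_cycle)
    ultimately show ?thesis by blast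
  next
    case False
    have "presents_cokernel (insert e F) s t (\<lambda>y. p (y(e := 0))) b"
      using presents_cokernel_bridge[OF insert.hyps(2) pres False] .
    moreover have "b + card V = card (insert e F) + card (graph_components V (insert e F) s t)"
      using count insert components_insert_bridge[OF assms(2) _ _ False] by simp
    ultimately show ?thesis by blast
  qed
qed

lemma presents_cokernel_extend:
  fixes p :: "('e \<Rightarrow> 'm::ab_group_add) \<Rightarrow> nat \<Rightarrow> 'm" and s t :: "'e \<Rightarrow> 'v"
  assumes pres: "presents_cokernel Z s t p b" and sub: "Z \<subseteq> E"
  defines "q \<equiv> \<lambda>y. p (\<lambda>e. if e \<in> Z then y e else 0)"
  shows "\<forall>y\<in>cochains E. \<forall>z\<in>cochains E. q (y + z) = q y + q z"
    and "q ` cochains E = tuples b"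
    and "{y \<in> cochains E. q y = 0} = {y \<in> cochains E. \<exists>x. \<forall>e\<in>Z. y e = x (t e) - x (s e)}"
proof -
  define r where "r y = (\<lambda>e. if e \<in> Z then y e else 0)" for y :: "'e \<Rightarrow> 'm"
  have q_def': "q y = p (r y)" for y unfolding q_def r_def ..
  have r_cochain: "r y \<in> cochains Z" for y unfolding r_def cochains_def by simp
  note p_add = presents_cokernelD(1)[OF pres] and p_im = presents_cokernelD(2)[OF pres]
    and p_ker = presents_cokernelD(3)[OF pres]
  have "r (y + z) = r y + r z" for y z unfolding r_def by (simp add: fun_eq_iff)
  then show "\<forall>y\<in>cochains E. \<forall>z\<in>cochains E. q (y + z) = q y + q z"
    using p_add r_cochain unfolding q_def' by simp
  have "r ` cochains E = cochains Z"
  proof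
    show "cochains Z \<subseteq> r ` cochains E"
    proof
      fix y :: "'e \<Rightarrow> 'm" assume y: "y \<in> cochains Z"
      then have "y \<in> cochains E" "r y = y" using sub unfolding cochains_def r_def by auto
      then show "y \<in> r ` cochains E" by (metis image_eqI)
    qed
  qed (use r_cochain in blast)
  then show "q ` cochains E = tuples b" unfolding q_def' using p_im by (metis image_image)
  have "r y = coboundary Z s t x \<longleftrightarrow> (\<forall>e\<in>Z. y e = x (t e) - x (s e))" for y x
    unfolding r_def coboundary_def by (auto simp: fun_eq_iff)
  then show "{y \<in> cochains E. q y = 0} = {y \<in> cochains E. \<exists>x. \<forall>e\<in>Z. y e = x (t e) - x (s e)}"
    unfolding q_def' using p_ker[OF r_cochain] by auto
qed

section \<open>The differential of the complexes on a single edge\<close>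

lemma zmul_0 [simp]: "zmul 0 g = 0" unfolding zmul_def by simp
lemma zmul_zero [simp]: "zmul k (0::'g::ab_group_add) = 0" unfolding zmul_def by simp
lemma zmul_1 [simp]: "zmul 1 g = g" unfolding zmul_def by simp
lemma zmul_minus_1 [simp]: "zmul (-1) g = - g" unfolding zmul_def by simp

lemma incidence_sum:
  assumes "finite (VF C)" "src C e \<in> VF C" "tgt C e \<in> VF C"
  shows "(\<Sum>v\<in>VF C. zmul (eps C e v) (f v)) = f (tgt C e) - f (src C e)"
proof -
  have "zmul (eps C e v) (f v) = (if v = tgt C e then f v else 0) - (if v = src C e then f v else 0)" for v
    unfolding eps_def by (cases "v = tgt C e"; cases "v = src C e") simp_all
  then show ?thesis using assms by (simp add: sum_subtractf)
qed

lemma cx_map_bounded: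
  assumes "finite (VF C)" "e \<in> bounded_edges C"
  shows "cx_map cal C x e =
           (\<lambda>i. fst x (tgt C e) i - fst x (src C e) i + zmul (edge_mult cal C e) (snd x e i))"
  using assms incidence_sum[OF assms(1), of e "\<lambda>v. fst x v _"]
  unfolding cx_map_def bounded_edges_def by simp

lemma slope_G_zero: "(\<lambda>_. 0) \<in> slope_G C e"
  unfolding slope_G_def by (rule CollectI, rule exI[of _ "{}"]) simp

lemma slope_G_trivial: "slope C e = {\<lambda>_. 0} \<Longrightarrow> slope_G C e = {\<lambda>_. 0}"
  unfolding slope_G_def by (auto simp: fun_eq_iff)

lemma zero_slope_edge_part:
  assumes "x \<in> cx_dom C" "e \<in> zero_slope_edges C"
  shows "snd x e = (\<lambda>_. 0)"
proof -
  have "e \<in> bounded_edges C" "slope C e = {\<lambda>_. 0}"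
    using assms(2) unfolding zero_slope_edges_def by auto
  moreover from this(2) have "slope_G C e = {\<lambda>_. 0}" by (rule slope_G_trivial)
  ultimately show ?thesis using assms(1) unfolding cx_dom_def by auto
qed

lemma cx_map_zero_slope:
  assumes "finite (VF C)" "x \<in> cx_dom C" "e \<in> zero_slope_edges C"
  shows "cx_map cal C x e = fst x (tgt C e) - fst x (src C e)"
proof -
  have "e \<in> bounded_edges C" using assms(3) unfolding zero_slope_edges_def by auto
  then show ?thesis using cx_map_bounded[OF assms(1), of e cal x] zero_slope_edge_part[OF assms(2,3)]
    by (simp add: fun_eq_iff)
qed

section \<open>The contracted curve\<close>

lemma rel0_edge_adj: "rel0 C = edge_adj (zero_slope_edges C) (src C) (tgt C)"
  unfolding rel0_def edge_adj_def by (auto simp: fun_eq_iff)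

lemma vclass_component:
  "v \<in> VF C \<Longrightarrow> vclass C v = component (VF C) (zero_slope_edges C) (src C) (tgt C) v"
  unfolding vclass_def component_def rel0_edge_adj by simp

lemma zero_slope_ends: "e \<in> zero_slope_edges C \<Longrightarrow> src C e \<in> VF C \<and> tgt C e \<in> VF C"
  unfolding zero_slope_edges_def bounded_edges_def by blast

lemma zero_slope_vclass: "e \<in> zero_slope_edges C \<Longrightarrow> vclass C (tgt C e) = vclass C (src C e)"
  using zero_slope_ends[of e C] linked_edge[of e "zero_slope_edges C" "src C" "tgt C"]
  by (simp add: vclass_component component_eq)

context
  fixes C :: "('v, 'e, 'n) tcurve"
  assumes curve: "is_param_trop_curve C"
begin

lemma finite_VF: "finite (VF C)" and finite_VI: "finite (VI C)" and finite_ED: "finite (ED C)"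
  and VF_VI_disjoint: "VF C \<inter> VI C = {}"
  using curve unfolding is_param_trop_curve_def by blast+

lemma edge_ends: "e \<in> ED C \<Longrightarrow> src C e \<in> VF C \<union> VI C \<and> tgt C e \<in> VF C \<union> VI C"
  using curve unfolding is_param_trop_curve_def by blast

text \<open>h is constant along an edge of trivial slope: the lattice vector (h(tgt) - h(src))/|e|
  lies on the line spanned by h(tgt) - h(src), hence in N_e = 0.\<close>
lemma zero_slope_hmap:
  assumes e: "e \<in> zero_slope_edges C"
  shows "hmap C (tgt C e) = hmap C (src C e)"
proof -
  have eb: "e \<in> bounded_edges C" and sl: "slope C e = {\<lambda>_. 0}"
    using e unfolding zero_slope_edges_def by auto
  have len: "len C e > 0" and lattice: "in_lattice (edge_vec C e)"
    using curve eb unfolding is_param_trop_curve_def by blast+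
  define a where "a i = (SOME k. real_of_int k = edge_vec C e i)" for i
  have a: "real_of_int (a i) = edge_vec C e i" for i
  proof -
    have "\<exists>k. real_of_int k = edge_vec C e i"
      using lattice unfolding in_lattice_def by (metis Ints_cases)
    then show ?thesis unfolding a_def by (rule someI_ex)
  qed
  have "a \<in> slope C e" unfolding slope_def
    by (rule CollectI, rule exI[of _ "1 / len C e"]) (simp add: a edge_vec_def)
  then have "edge_vec C e i = 0" for i using sl a[of i] by auto
  then show ?thesis using len unfolding edge_vec_def by (auto simp: fun_eq_iff)
qed

lemma vclass_self: "v \<in> VF C \<Longrightarrow> v \<in> vclass C v"
  unfolding vclass_def by simp

lemma vclass_VI: "v \<in> VI C \<Longrightarrow> vclass C v = {v}"
  using VF_VI_disjoint unfolding vclass_def by auto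

lemma vclass_hmap:
  assumes "v \<in> VF C" "w \<in> vclass C v"
  shows "hmap C w = hmap C v"
proof (rule linked_const)
  show "\<forall>e\<in>zero_slope_edges C. hmap C (tgt C e) = hmap C (src C e)"
    using zero_slope_hmap by blast
  show "linked (zero_slope_edges C) (src C) (tgt C) v w"
    using assms unfolding vclass_def rel0_edge_adj by simp
qed

lemma vclass_in_VF:
  assumes "v \<in> VF C \<union> VI C"
  shows "vclass C v \<in> vclass C ` VF C \<longleftrightarrow> v \<in> VF C"
proof
  assume "vclass C v \<in> vclass C ` VF C"
  then obtain w where w: "w \<in> VF C" "vclass C v = vclass C w" by auto
  show "v \<in> VF C"
  proof (rule ccontr)
    assume "v \<notin> VF C"
    then have "vclass C w = {v}" using assms w(2) vclass_VI by auto
    then show False using vclass_self[OF w(1)] w(1) \<open>v \<notin> VF C\<close> by simp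
  qed
qed simp

lemma bounded_contract: "bounded_edges (contract C) = bounded_edges C - zero_slope_edges C"
proof -
  have "e \<in> bounded_edges (contract C) \<longleftrightarrow> e \<in> bounded_edges C - zero_slope_edges C" for e
  proof (cases "e \<in> ED C")
    case True
    then show ?thesis using edge_ends[OF True] vclass_in_VF
      unfolding bounded_edges_def contract_def by auto
  qed (simp add: bounded_edges_def contract_def)
  then show ?thesis by blast
qed

lemma hmap_contract:
  assumes "v \<in> VF C"
  shows "hmap (contract C) (vclass C v) = hmap C v"
proof -
  have "(SOME u. u \<in> vclass C v) \<in> vclass C v" using vclass_self[OF assms] by (rule someI)
  then show ?thesis unfolding contract_def using vclass_hmap[OF assms] by simp
qed

lemma edge_data_contract:
  assumes "e \<in> bounded_edges (contract C)"
  shows "slope_G (contract C) e = slope_G C e" "edge_mult cal (contract C) e = edge_mult cal C e"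
proof -
  have "src C e \<in> VF C" "tgt C e \<in> VF C"
    using assms bounded_contract unfolding bounded_edges_def by auto
  then have h: "hmap (contract C) (tgt (contract C) e) = hmap C (tgt C e)"
    "hmap (contract C) (src (contract C) e) = hmap C (src C e)"
    using hmap_contract by (simp_all add: contract_def[of C] del: hmap_contract)
  have vec: "edge_vec (contract C) e = edge_vec C e"
    unfolding edge_vec_def h by (simp add: contract_def)
  have "slope (contract C) e = slope C e" unfolding slope_def h ..
  then show "slope_G (contract C) e = slope_G C e" unfolding slope_G_def by simp
  show "edge_mult cal (contract C) e = edge_mult cal C e" unfolding edge_mult_def vec ..
qed

lemma cx_map_contract:
  assumes "e \<in> bounded_edges (contract C)"
  shows "cx_map cal (contract C) x e = (\<lambda>i. fst x (vclass C (tgt C e)) i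
           - fst x (vclass C (src C e)) i + zmul (edge_mult cal C e) (snd x e i))"
  using cx_map_bounded[OF _ assms, of cal x] finite_VF edge_data_contract(2)[OF assms]
  by (simp add: contract_def[of C])

text \<open>Contracting \<Gamma>0 removes |E(\<Gamma>0)| edges and replaces its |V(\<Gamma>0)| vertices by its components;
  so the genus drops by the first Betti number of \<Gamma>0.\<close>
lemma genus_difference:
  "genus C - genus (contract C) = int (card (zero_slope_edges C))
     + int (card (graph_components (VF C) (zero_slope_edges C) (src C) (tgt C))) - int (card (VF C))"
proof -
  have Z_ED: "zero_slope_edges C \<subseteq> ED C"
    unfolding zero_slope_edges_def bounded_edges_def by blast
  have components: "graph_components (VF C) (zero_slope_edges C) (src C) (tgt C) = vclass C ` VF C"
    unfolding graph_components_def by (rule image_cong[OF refl]) (simp add: vclass_component)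
  have "vclass C ` VI C = (\<lambda>v. {v}) ` VI C" by (rule image_cong[OF refl]) (rule vclass_VI)
  then have "card (vclass C ` VI C) = card (VI C)" by (simp add: card_image)
  moreover have "vclass C ` VF C \<inter> vclass C ` VI C = {}"
  proof (rule ccontr)
    assume "vclass C ` VF C \<inter> vclass C ` VI C \<noteq> {}"
    then obtain v w where v: "v \<in> VF C" "w \<in> VI C" "vclass C v = vclass C w" by blast
    then have "v = w" using vclass_self[OF v(1)] vclass_VI[OF v(2)] by simp
    then show False using v VF_VI_disjoint by blast
  qed
  ultimately have "card (VF (contract C) \<union> VI (contract C)) = card (vclass C ` VF C) + card (VI C)"
    using finite_VF finite_VI by (simp add: contract_def card_Un_disjoint)
  moreover have "card (VF C \<union> VI C) = card (VF C) + card (VI C)"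
    using finite_VF finite_VI VF_VI_disjoint by (simp add: card_Un_disjoint)
  moreover have "card (ED (contract C)) = card (ED C) - card (zero_slope_edges C)"
    using finite_ED Z_ED by (simp add: contract_def card_Diff_subset finite_subset)
  moreover have "card (zero_slope_edges C) \<le> card (ED C)" using finite_ED Z_ED by (rule card_mono)
  ultimately show ?thesis unfolding genus_def components by simp
qed

section \<open>Comparing the complexes of \<Gamma> and \<Gamma>/\<Gamma>0\<close>

lemma nat_map1_compatible:
  assumes x: "x \<in> cx_dom (contract C)"
  shows "nat_map1 C x \<in> cx_dom C" and "cx_map cal C (nat_map1 C x) = cx_map cal (contract C) x"
proof -
  have xe0: "e \<notin> bounded_edges (contract C) \<Longrightarrow> snd x e = (\<lambda>_. 0)"
    and xeS: "e \<in> bounded_edges (contract C) \<Longrightarrow> snd x e \<in> slope_G (contract C) e" for e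
    using x unfolding cx_dom_def by auto
  have vertex: "fst (nat_map1 C x) v = (if v \<in> VF C then fst x (vclass C v) else (\<lambda>_. 0))"
    and edge: "snd (nat_map1 C x) = snd x" for v
    unfolding nat_map1_def by simp_all
  have slope: "snd x e \<in> slope_G C e" if "e \<in> bounded_edges C" for e
  proof (cases "e \<in> zero_slope_edges C")
    case True then show ?thesis using xe0 bounded_contract slope_G_zero by auto
  next
    case False
    then have "e \<in> bounded_edges (contract C)" using that bounded_contract by auto
    then show ?thesis using xeS edge_data_contract(1) by metis
  qed
  show dom: "nat_map1 C x \<in> cx_dom C"
    using xe0 slope bounded_contract unfolding cx_dom_def nat_map1_def by (auto simp: case_prod_beta)
  show "cx_map cal C (nat_map1 C x) = cx_map cal (contract C) x"
  proof
    fix e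
    consider (unbounded) "e \<notin> bounded_edges C" | (zero) "e \<in> zero_slope_edges C"
      | (kept) "e \<in> bounded_edges (contract C)"
      using bounded_contract by blast
    then show "cx_map cal C (nat_map1 C x) e = cx_map cal (contract C) x e"
    proof cases
      case unbounded
      then show ?thesis using bounded_contract unfolding cx_map_def by simp
    next
      case zero
      then have "e \<notin> bounded_edges (contract C)" using bounded_contract by blast
      then show ?thesis
        using cx_map_zero_slope[OF finite_VF dom zero, of cal] zero_slope_ends[OF zero]
          zero_slope_vclass[OF zero]
        unfolding vertex cx_map_def[of cal "contract C"] by (simp add: fun_eq_iff)
    next
      case kept
      then have "e \<in> bounded_edges C" using bounded_contract by blast
      then show ?thesis
        using cx_map_bounded[OF finite_VF, of e cal "nat_map1 C x"] cx_map_contract[OF kept, of cal x]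
        unfolding vertex edge bounded_edges_def by simp
    qed
  qed
qed

text \<open>The natural map is injective: every vertex of \<Gamma>/\<Gamma>0 is the class of a vertex of \<Gamma>.\<close>
lemma nat_map1_inj: "inj_on (nat_map1 C) (cx_dom (contract C))"
proof (rule inj_onI)
  fix x x' assume x: "x \<in> cx_dom (contract C)" and x': "x' \<in> cx_dom (contract C)"
    and eq: "nat_map1 C x = nat_map1 C x'"
  have "fst x c = fst x' c" for c
  proof (cases "c \<in> VF (contract C)")
    case True
    then obtain v where v: "v \<in> VF C" "c = vclass C v" unfolding contract_def by auto
    show ?thesis using fun_cong[OF arg_cong[OF eq, of fst], of v] v unfolding nat_map1_def by simp
  next
    case False
    then show ?thesis using x x' unfolding cx_dom_def by auto
  qed
  moreover have "snd x = snd x'" using arg_cong[OF eq, of snd] unfolding nat_map1_def by simp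
  ultimately show "x = x'" by (simp add: prod_eq_iff fun_eq_iff)
qed

text \<open>Conversely, an element of the domain of \<Gamma> whose differential vanishes on \<Gamma>0 is constant
  on the components of \<Gamma>0, hence comes from \<Gamma>/\<Gamma>0.\<close>
lemma nat_map1_descends:
  assumes w: "w \<in> cx_dom C" and flat: "\<forall>e\<in>zero_slope_edges C. cx_map cal C w e = (\<lambda>_. 0)"
  shows "\<exists>x\<in>cx_dom (contract C). nat_map1 C x = w"
proof -
  obtain xv xe where ww: "w = (xv, xe)" by (cases w)
  have xv0: "v \<notin> VF C \<Longrightarrow> xv v = (\<lambda>_. 0)" and xe0: "e \<notin> bounded_edges C \<Longrightarrow> xe e = (\<lambda>_. 0)"
    and xeS: "e \<in> bounded_edges C \<Longrightarrow> xe e \<in> slope_G C e" for v e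
    using w unfolding ww cx_dom_def by auto
  have "\<forall>e\<in>zero_slope_edges C. xv (tgt C e) = xv (src C e)"
    using flat cx_map_zero_slope[OF finite_VF w] unfolding ww by (simp add: zero_fun_def[symmetric])
  then have const: "xv u = xv v" if "v \<in> VF C" "u \<in> vclass C v" for u v
    by (rule linked_const) (use that in \<open>simp add: vclass_def rel0_edge_adj\<close>)
  define X where "X c = (if c \<in> VF (contract C) then xv (SOME u. u \<in> c) else (\<lambda>_. 0))" for c
  have "X (vclass C v) = xv v" if "v \<in> VF C" for v
  proof -
    have "(SOME u. u \<in> vclass C v) \<in> vclass C v" using vclass_self[OF that] by (rule someI)
    then show ?thesis using const[OF that] that unfolding X_def contract_def by simp
  qed
  then have "nat_map1 C (X, xe) = w" unfolding nat_map1_def ww using xv0 by (auto simp: fun_eq_iff)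
  moreover have "(X, xe) \<in> cx_dom (contract C)"
    using xe0 xeS edge_data_contract(1) bounded_contract zero_slope_edge_part[OF w]
    unfolding cx_dom_def X_def ww by auto
  ultimately show ?thesis by blast
qed

lemma kernel_bij: "bij_betw (nat_map1 C) (cx_ker cal (contract C)) (cx_ker cal C)"
proof (rule bij_betw_imageI)
  show "inj_on (nat_map1 C) (cx_ker cal (contract C))"
    using nat_map1_inj by (rule inj_on_subset) (auto simp: cx_ker_def)
  show "nat_map1 C ` cx_ker cal (contract C) = cx_ker cal C"
  proof
    show "nat_map1 C ` cx_ker cal (contract C) \<subseteq> cx_ker cal C"
    proof
      fix w assume "w \<in> nat_map1 C ` cx_ker cal (contract C)"
      then obtain x where "x \<in> cx_ker cal (contract C)" "w = nat_map1 C x" by blast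
      then show "w \<in> cx_ker cal C" using nat_map1_compatible[of x] unfolding cx_ker_def by simp
    qed
    show "cx_ker cal C \<subseteq> nat_map1 C ` cx_ker cal (contract C)"
    proof
      fix w assume "w \<in> cx_ker cal C"
      then have w: "w \<in> cx_dom C" "cx_map cal C w = (\<lambda>_ _. 0)" unfolding cx_ker_def by auto
      then obtain x where x: "x \<in> cx_dom (contract C)" "nat_map1 C x = w"
        using nat_map1_descends[of w cal] by auto
      then have "x \<in> cx_ker cal (contract C)"
        using w nat_map1_compatible(2)[OF x(1)] unfolding cx_ker_def by simp
      then show "w \<in> nat_map1 C ` cx_ker cal (contract C)" using x(2) by blast
    qed
  qed
qed

lemma image_agree:
  assumes y: "y \<in> cx_cod (contract C)"
  shows "y \<in> cx_image cal (contract C) \<longleftrightarrow> y \<in> cx_image cal C"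
proof
  assume "y \<in> cx_image cal (contract C)"
  then obtain x where x: "x \<in> cx_dom (contract C)" "y = cx_map cal (contract C) x"
    unfolding cx_image_def by blast
  then have "y = cx_map cal C (nat_map1 C x)" using nat_map1_compatible(2)[OF x(1)] by simp
  then show "y \<in> cx_image cal C"
    using nat_map1_compatible(1)[OF x(1)] unfolding cx_image_def by blast
next
  assume "y \<in> cx_image cal C"
  then obtain w where w: "w \<in> cx_dom C" "y = cx_map cal C w" unfolding cx_image_def by blast
  have "\<forall>e\<in>zero_slope_edges C. cx_map cal C w e = (\<lambda>_. 0)"
    using y bounded_contract unfolding w(2) cx_cod_def by blast
  then obtain x where x: "x \<in> cx_dom (contract C)" "nat_map1 C x = w"
    using nat_map1_descends[OF w(1)] by blast
  then show "y \<in> cx_image cal (contract C)"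
    using nat_map1_compatible(2)[OF x(1)] w(2) unfolding cx_image_def by auto
qed

lemma cod_contract_plus_image:
  "{(\<lambda>e i. y e i + z e i) | y z :: 'e \<Rightarrow> 'n \<Rightarrow> 'g::ab_group_add.
       y \<in> cx_cod (contract C) \<and> z \<in> cx_image cal C} =
   {y \<in> cx_cod C. \<exists>x. \<forall>e\<in>zero_slope_edges C. y e = x (tgt C e) - x (src C e)}"
proof (intro equalityI subsetI)
  fix s :: "'e \<Rightarrow> 'n \<Rightarrow> 'g" assume "s \<in> {(\<lambda>e i. y e i + z e i) | y z. y \<in> cx_cod (contract C) \<and> z \<in> cx_image cal C}"
  then obtain y w where s: "s = (\<lambda>e i. y e i + cx_map cal C w e i)"
    and y: "y \<in> cx_cod (contract C)" and w: "w \<in> cx_dom C"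
    unfolding cx_image_def by blast
  have "s \<in> cx_cod C" using y bounded_contract unfolding s cx_cod_def cx_map_def by auto
  moreover have "s e = fst w (tgt C e) - fst w (src C e)" if "e \<in> zero_slope_edges C" for e
    using y bounded_contract that cx_map_zero_slope[OF finite_VF w that, of cal]
    unfolding s cx_cod_def by (simp add: fun_eq_iff)
  ultimately show "s \<in> {y \<in> cx_cod C. \<exists>x. \<forall>e\<in>zero_slope_edges C. y e = x (tgt C e) - x (src C e)}"
    by blast
next
  fix y :: "'e \<Rightarrow> 'n \<Rightarrow> 'g" assume "y \<in> {y \<in> cx_cod C. \<exists>x. \<forall>e\<in>zero_slope_edges C. y e = x (tgt C e) - x (src C e)}"
  then obtain x where y: "y \<in> cx_cod C" and x: "\<forall>e\<in>zero_slope_edges C. y e = x (tgt C e) - x (src C e)"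
    by blast
  define w where "w = ((\<lambda>v. if v \<in> VF C then x v else (\<lambda>_. 0)), (\<lambda>_ _. 0) :: 'e \<Rightarrow> 'n \<Rightarrow> 'g)"
  have w_dom: "w \<in> cx_dom C" unfolding w_def cx_dom_def using slope_G_zero by auto
  have z: "cx_map cal C w e = x (tgt C e) - x (src C e)" if "e \<in> bounded_edges C" for e
    using cx_map_bounded[OF finite_VF that, of cal w] that
    unfolding w_def bounded_edges_def by (simp add: fun_eq_iff)
  define y' where "y' = (\<lambda>e i. y e i - cx_map cal C w e i)"
  have "y' \<in> cx_cod (contract C)"
    using y x z bounded_contract unfolding y'_def cx_cod_def cx_map_def
    by (auto simp: fun_eq_iff zero_slope_edges_def)
  moreover have "cx_map cal C w \<in> cx_image cal C" using w_dom unfolding cx_image_def by blast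
  moreover have "y = (\<lambda>e i. y' e i + cx_map cal C w e i)" unfolding y'_def by simp
  ultimately show "y \<in> {(\<lambda>e i. y e i + z e i) | y z. y \<in> cx_cod (contract C) \<and> z \<in> cx_image cal C}"
    by blast
qed

lemma cokernel_sequence:
  fixes pZ :: "('e \<Rightarrow> 'n \<Rightarrow> 'g::ab_group_add) \<Rightarrow> nat \<Rightarrow> 'n \<Rightarrow> 'g"
  assumes pres: "presents_cokernel (zero_slope_edges C) (src C) (tgt C) pZ b"
  shows "\<exists>p :: ('e \<Rightarrow> 'n \<Rightarrow> 'g) \<Rightarrow> nat \<Rightarrow> 'n \<Rightarrow> 'g.
           (\<forall>y\<in>cx_cod C. \<forall>z\<in>cx_cod C. p (\<lambda>e i. y e i + z e i) = (\<lambda>j i. p y j i + p z j i))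
         \<and> p ` cx_cod C = NG_pow b
         \<and> {y \<in> cx_cod C. p y = (\<lambda>_ _. 0)} =
             {(\<lambda>e i. y e i + z e i) | y z. y \<in> cx_cod (contract C) \<and> z \<in> cx_image cal C}"
proof -
  define q where "q y = pZ (\<lambda>e. if e \<in> zero_slope_edges C then y e else 0)" for y
  have sub: "zero_slope_edges C \<subseteq> bounded_edges C" unfolding zero_slope_edges_def by blast
  have cod: "cx_cod C = cochains (bounded_edges C)"
    unfolding cx_cod_def cochains_def zero_fun_def ..
  note q = presents_cokernel_extend[OF pres sub, folded q_def, unfolded cod[symmetric]]
  have "\<forall>y\<in>cx_cod C. \<forall>z\<in>cx_cod C. q (\<lambda>e i. y e i + z e i) = (\<lambda>j i. q y j i + q z j i)"
    using q(1) by (simp add: plus_fun_def)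
  moreover have "q ` cx_cod C = NG_pow b"
    using q(2) unfolding NG_pow_def tuples_def zero_fun_def .
  moreover have "{y \<in> cx_cod C. q y = (\<lambda>_ _. 0)} =
      {(\<lambda>e i. y e i + z e i) | y z. y \<in> cx_cod (contract C) \<and> z \<in> cx_image cal C}"
    using q(3) unfolding cod_contract_plus_image zero_fun_def .
  ultimately show ?thesis by blast
qed

lemma zero_slope_cokernel:
  "\<exists>(pZ :: ('e \<Rightarrow> 'n \<Rightarrow> 'g::ab_group_add) \<Rightarrow> nat \<Rightarrow> 'n \<Rightarrow> 'g) b.
     presents_cokernel (zero_slope_edges C) (src C) (tgt C) pZ b
     \<and> genus C - genus (contract C) = int b"
proof -
  have "finite (zero_slope_edges C)"
    using finite_ED by (rule finite_subset[rotated]) (auto simp: zero_slope_edges_def bounded_edges_def)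
  then show ?thesis
    using coboundary_cokernel[OF _ finite_VF, of "zero_slope_edges C" "src C" "tgt C"]
      zero_slope_ends genus_difference
    by fastforce
qed

end

theorem mainTheorem9:
  fixes C :: "('v, 'e, 'n::finite) tcurve"
  assumes "is_param_trop_curve C"
  shows "genus (contract C) \<le> genus C \<and>
    (\<forall>cal::bool.
       bij_betw (nat_map1 C)
         (cx_ker cal (contract C) :: (('v set \<Rightarrow> 'n \<Rightarrow> 'g::ab_group_add) \<times> ('e \<Rightarrow> 'n \<Rightarrow> 'g)) set)
         (cx_ker cal C)
     \<and> (\<forall>y \<in> (cx_cod (contract C) :: ('e \<Rightarrow> 'n \<Rightarrow> 'g) set).
           y \<in> cx_image cal (contract C) \<longleftrightarrow> y \<in> cx_image cal C)
     \<and> (\<exists>p :: ('e \<Rightarrow> 'n \<Rightarrow> 'g) \<Rightarrow> nat \<Rightarrow> 'n \<Rightarrow> 'g.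
           (\<forall>y\<in>cx_cod C. \<forall>z\<in>cx_cod C. p (\<lambda>e i. y e i + z e i) = (\<lambda>j i. p y j i + p z j i))
         \<and> p ` cx_cod C = NG_pow (nat (genus C - genus (contract C)))
         \<and> {y \<in> cx_cod C. p y = (\<lambda>_ _. 0)} =
             {(\<lambda>e i. y e i + z e i) | y z. y \<in> cx_cod (contract C) \<and> z \<in> cx_image cal C}))"
proof -
  obtain pZ :: "('e \<Rightarrow> 'n \<Rightarrow> 'g) \<Rightarrow> nat \<Rightarrow> 'n \<Rightarrow> 'g" and b
    where pres: "presents_cokernel (zero_slope_edges C) (src C) (tgt C) pZ b"
      and drop: "genus C - genus (contract C) = int b"
    using zero_slope_cokernel[OF assms] by blast
  show ?thesis
    using drop kernel_bij[OF assms] image_agree[OF assms] cokernel_sequence[OF assms pres] by auto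
qed

end
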